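(* Let $P:\mathbf{R}^{24}\to\mathbf{R}$, $P(X,Y,Z)=\mathrm{Re}((oX\cdot oY)\cdot oZ)$ for $X,Y,Z\in\mathbf{R}^8$. Let $a=(x,y,z)\in S^{23}_1$ (the unit sphere of $\mathbf{R}^{24}$, with $x,y,z\in\mathbf{R}^8$), and set $W=P(a)$, $m=|x|\cdot|y|\cdot|z|$. Then the characteristic polynomial $CH(T)=\det(T\cdot I_{24}-D^2P(a))$ of the Hessian $D^2P(a)$ equals $$CH(T)=(T^3-T+2m)(T^3-T-2m)(T^3-T+2W)^6.$$
   Context: $\mathcal{O}$ denotes the algebra of Cayley octonions: the 8-dimensional real algebra with basis $1,e_1,\dots,e_7$, where $1$ is the unit, $e_i^2=-1$, $e_ie_j=-e_je_i$ for $i\neq j$, and for every $i$ (indices mod 7) $e_ie_{i+1}=e_{i+3}$, $e_{i+1}e_{i+3}=e_i$, $e_{i+3}e_i=e_{i+1}$ (so $e_1e_2=e_4$). For $t=(t_0,\dots,t_7)\in\mathbf{R}^8$, $ot=t_0+t_1e_1+\dots+t_7e_7\in\mathcal{O}$; $\mathrm{Re}$ denotes the coefficient of $1$. *)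

theory Defs
  imports Complex_Main "Jordan_Normal_Form.Char_Poly"
begin

text \<open>Octonions are represented by coefficient functions t :: nat => real, where
  t 0 is the coefficient of 1 and t i the coefficient of e_i (1 <= i <= 7).\<close>

definition onorm7 :: "nat \<Rightarrow> nat" where
  "onorm7 s = ((s + 6) mod 7) + 1"

text \<open>opos i j k holds iff e_i e_j = e_k by the rules e_t e_(t+1) = e_(t+3),
  e_(t+1) e_(t+3) = e_t, e_(t+3) e_t = e_(t+1) (indices mod 7).\<close>
definition opos :: "nat \<Rightarrow> nat \<Rightarrow> nat \<Rightarrow> bool" where
  "opos i j k \<longleftrightarrow> (\<exists>t\<in>{1..7}.
      (i, j, k) = (onorm7 t, onorm7 (t+1), onorm7 (t+3)) \<or>
      (i, j, k) = (onorm7 (t+1), onorm7 (t+3), onorm7 t) \<or>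
      (i, j, k) = (onorm7 (t+3), onorm7 t, onorm7 (t+1)))"

text \<open>Structure constants: e_i e_j = sum_k octc i j k e_k, with e_0 = 1.\<close>
definition octc :: "nat \<Rightarrow> nat \<Rightarrow> nat \<Rightarrow> real" where
  "octc i j k =
    (if i = 0 then (if k = j then 1 else 0)
     else if j = 0 then (if k = i then 1 else 0)
     else if i = j then (if k = 0 then -1 else 0)
     else if opos i j k then 1
     else if opos j i k then -1
     else 0)"

definition omul :: "(nat \<Rightarrow> real) \<Rightarrow> (nat \<Rightarrow> real) \<Rightarrow> (nat \<Rightarrow> real)" where
  "omul p q = (\<lambda>k. \<Sum>i<8. \<Sum>j<8. p i * q j * octc i j k)"

text \<open>Points of R^24 are functions a :: nat => real, only indices 0..23 are relevant;
  a = (x,y,z) with x = a 0..7, y = a 8..15, z = a 16..23.\<close>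
definition xpart :: "(nat \<Rightarrow> real) \<Rightarrow> nat \<Rightarrow> real" where
  "xpart a = (\<lambda>i. if i < 8 then a i else 0)"
definition ypart :: "(nat \<Rightarrow> real) \<Rightarrow> nat \<Rightarrow> real" where
  "ypart a = (\<lambda>i. if i < 8 then a (8 + i) else 0)"
definition zpart :: "(nat \<Rightarrow> real) \<Rightarrow> nat \<Rightarrow> real" where
  "zpart a = (\<lambda>i. if i < 8 then a (16 + i) else 0)"

definition Pcub :: "(nat \<Rightarrow> real) \<Rightarrow> real" where
  "Pcub a = omul (omul (xpart a) (ypart a)) (zpart a) 0"

definition enorm8 :: "(nat \<Rightarrow> real) \<Rightarrow> real" where
  "enorm8 x = sqrt (\<Sum>i<8. (x i)\<^sup>2)"

definition rderiv :: "(real \<Rightarrow> real) \<Rightarrow> real \<Rightarrow> real" where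
  "rderiv f x = (THE D. (f has_real_derivative D) (at x))"

definition hess_entry :: "((nat \<Rightarrow> real) \<Rightarrow> real) \<Rightarrow> (nat \<Rightarrow> real) \<Rightarrow> nat \<Rightarrow> nat \<Rightarrow> real" where
  "hess_entry f a i j =
     rderiv (\<lambda>s. rderiv (\<lambda>t. f (\<lambda>k. a k + (if k = i then s else 0) + (if k = j then t else 0))) 0) 0"

definition hessian :: "nat \<Rightarrow> ((nat \<Rightarrow> real) \<Rightarrow> real) \<Rightarrow> (nat \<Rightarrow> real) \<Rightarrow> real mat" where
  "hessian n f a = mat n n (\<lambda>(i, j). hess_entry f a i j)"

end

theory Submission
  imports Defs
begin

text \<open>By polarization, the Hessian \<open>H\<close> of \<open>P\<close> at \<open>a = (x, y, z)\<close> maps \<open>(u, v, w)\<close> to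
  \<open>(conj (v z + y w), conj (w x + z u), conj (u y + x v))\<close>. The vectors \<open>(x, 0, 0), (0, y, 0), (0, 0, z)\<close>
  and the three blocks \<open>(conj (y z), 0, 0), (0, conj (z x), 0), (0, 0, conj (x y))\<close> of the gradient
  span an \<open>H\<close>-invariant space, on which \<open>H\<close> has characteristic polynomial
  \<open>(T^3 - |a|^2 T)^2 - 4 |x|^2 |y|^2 |z|^2\<close>. For an octonion \<open>u\<close>, the alternative laws give
  \<open>H^3 (u, 0, 0) = |a|^2 H (u, 0, 0) - 2 P(a) (u, 0, 0)\<close> modulo that space. At suitable \<open>a\<close>, the
  chains \<open>(u, 0, 0), H (u, 0, 0), H^2 (u, 0, 0)\<close> for \<open>u = 1, e\<^sub>1, \<dots>, e\<^sub>5\<close> complete the six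
  vectors to a basis in which \<open>H\<close> is block triangular, with six companion blocks of
  \<open>T^3 - |a|^2 T + 2 P(a)\<close>. All identities involved are polynomial in \<open>a\<close>, so the factorization at
  an arbitrary point follows by working over \<open>real[t]\<close> at the generic point of a line through
  \<open>a\<close> and a point where the basis does not degenerate.\<close>

section \<open>Characteristic determinants of block matrices\<close>

lemma det_dim_1: assumes "A \<in> carrier_mat 1 1" shows "det A = A $$ (0, 0)"
proof -
  have "det A = (\<Sum>i<1. A $$ (i, 0) * cofactor A i 0)"
    by (rule laplace_expansion_column[OF assms]) auto
  also have "\<dots> = A $$ (0, 0) * cofactor A 0 0" by simp
  also have "cofactor A 0 0 = 1"
    unfolding cofactor_def using assms by (subst det_dim_zero) (auto simp: mat_delete_def)
  finally show ?thesis by simp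
qed

lemma det_dim_2: assumes "A \<in> carrier_mat 2 2"
  shows "det A = A $$ (0, 0) * A $$ (1, 1) - A $$ (1, 0) * A $$ (0, 1)"
proof -
  have "det A = (\<Sum>i<2. A $$ (i, 0) * cofactor A i 0)"
    by (rule laplace_expansion_column[OF assms]) auto
  also have "\<dots> = A $$ (0, 0) * cofactor A 0 0 + A $$ (1, 0) * cofactor A 1 0"
    by (simp add: numeral_eq_Suc lessThan_Suc)
  also have "cofactor A 0 0 = A $$ (1, 1)"
    unfolding cofactor_def using assms by (subst det_dim_1) (auto simp: mat_delete_def insert_index_def numeral_2_eq_2)
  also have "cofactor A 1 0 = - A $$ (0, 1)"
    unfolding cofactor_def using assms by (subst det_dim_1) (auto simp: mat_delete_def insert_index_def numeral_2_eq_2)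
  finally show ?thesis by simp
qed

lemma det_dim_3: assumes "A \<in> carrier_mat 3 3"
  shows "det A =
      A $$ (0, 0) * (A $$ (1, 1) * A $$ (2, 2) - A $$ (2, 1) * A $$ (1, 2))
    - A $$ (1, 0) * (A $$ (0, 1) * A $$ (2, 2) - A $$ (2, 1) * A $$ (0, 2))
    + A $$ (2, 0) * (A $$ (0, 1) * A $$ (1, 2) - A $$ (1, 1) * A $$ (0, 2))"
proof -
  have "det A = (\<Sum>i<3. A $$ (i, 0) * cofactor A i 0)"
    by (rule laplace_expansion_column[OF assms]) auto
  also have "\<dots> = A $$ (0, 0) * cofactor A 0 0 + A $$ (1, 0) * cofactor A 1 0 + A $$ (2, 0) * cofactor A 2 0"
    by (simp add: numeral_eq_Suc lessThan_Suc)
  also have "cofactor A 0 0 = A $$ (1, 1) * A $$ (2, 2) - A $$ (2, 1) * A $$ (1, 2)"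
    unfolding cofactor_def using assms by (subst det_dim_2) (auto simp: mat_delete_def insert_index_def numeral_2_eq_2)
  also have "cofactor A 1 0 = - (A $$ (0, 1) * A $$ (2, 2) - A $$ (2, 1) * A $$ (0, 2))"
    unfolding cofactor_def using assms by (subst det_dim_2) (auto simp: mat_delete_def insert_index_def numeral_2_eq_2)
  also have "cofactor A 2 0 = A $$ (0, 1) * A $$ (1, 2) - A $$ (1, 1) * A $$ (0, 2)"
    unfolding cofactor_def using assms by (subst det_dim_2) (auto simp: mat_delete_def insert_index_def numeral_2_eq_2)
  finally show ?thesis by (simp add: algebra_simps)
qed

lemma det_char_four_block_lower_left_zero:
  fixes A :: "'a::idom mat"
  assumes A: "A \<in> carrier_mat n n" and B: "B \<in> carrier_mat n m" and D: "D \<in> carrier_mat m m"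
  shows "det (x \<cdot>\<^sub>m 1\<^sub>m (n + m) - four_block_mat A B (0\<^sub>m m n) D) =
    det (x \<cdot>\<^sub>m 1\<^sub>m n - A) * det (x \<cdot>\<^sub>m 1\<^sub>m m - D)"
proof -
  have "x \<cdot>\<^sub>m 1\<^sub>m (n + m) - four_block_mat A B (0\<^sub>m m n) D =
      four_block_mat (x \<cdot>\<^sub>m 1\<^sub>m n - A) (- B) (0\<^sub>m m n) (x \<cdot>\<^sub>m 1\<^sub>m m - D)"
    by (rule eq_matI) (use A B D in auto)
  then show ?thesis
    by (simp, subst det_four_block_mat_lower_left_zero[of _ n _ m]) (use A B D in auto)
qed

lemma det_char_eq_if_intertwined:
  fixes A :: "'a::idom mat"
  assumes A: "A \<in> carrier_mat n n" and Q: "Q \<in> carrier_mat n n" and K: "K \<in> carrier_mat n n"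
    and intertwine: "A * Q = Q * K" and det_Q: "det Q \<noteq> 0"
  shows "det (x \<cdot>\<^sub>m 1\<^sub>m n - A) = det (x \<cdot>\<^sub>m 1\<^sub>m n - K)"
proof -
  have "(x \<cdot>\<^sub>m 1\<^sub>m n - A) * Q = (x \<cdot>\<^sub>m 1\<^sub>m n) * Q - A * Q"
    by (rule minus_mult_distrib_mat[OF _ A Q]) auto
  also have "(x \<cdot>\<^sub>m 1\<^sub>m n) * Q = x \<cdot>\<^sub>m Q"
    using Q by (subst mult_smult_assoc_mat[of _ n n]) auto
  also have "x \<cdot>\<^sub>m Q = Q * (x \<cdot>\<^sub>m 1\<^sub>m n)"
    using Q by (subst mult_smult_distrib[of _ n n]) auto
  also have "Q * (x \<cdot>\<^sub>m 1\<^sub>m n) - A * Q = Q * (x \<cdot>\<^sub>m 1\<^sub>m n - K)"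
    unfolding intertwine by (rule mult_minus_distrib_mat[OF Q _ K, symmetric]) auto
  finally have "det (x \<cdot>\<^sub>m 1\<^sub>m n - A) * det Q = det Q * det (x \<cdot>\<^sub>m 1\<^sub>m n - K)"
    using A Q K by (metis det_mult minus_carrier_mat one_carrier_mat smult_carrier_mat)
  with det_Q show ?thesis by (simp add: mult.commute)
qed

definition companion3 :: "'a::comm_ring_1 \<Rightarrow> 'a \<Rightarrow> 'a \<Rightarrow> 'a mat" where
  "companion3 c0 c1 c2 = mat 3 3 (\<lambda>(i, j). if j = 0 then (if i = 1 then 1 else 0)
     else if j = 1 then (if i = 2 then 1 else 0) else [c0, c1, c2] ! i)"

lemma det_char_companion3:
  "det (x \<cdot>\<^sub>m 1\<^sub>m 3 - companion3 c0 c1 c2) = x ^ 3 - c2 * x ^ 2 - c1 * x - c0"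
  by (subst det_dim_3) (auto simp: companion3_def algebra_simps power2_eq_square power3_eq_cube)

fun diag_copies :: "nat \<Rightarrow> 'a::zero mat \<Rightarrow> 'a mat" where
  "diag_copies 0 B = 0\<^sub>m 0 0"
| "diag_copies (Suc n) B = four_block_mat B (0\<^sub>m (dim_row B) (dim_row B * n)) (0\<^sub>m (dim_row B * n) (dim_row B)) (diag_copies n B)"

lemma dim_diag_copies [simp]:
  "dim_row (diag_copies n B) = dim_row B * n" "dim_col (diag_copies n B) = dim_col B * n"
  by (induction n) auto

lemma diag_copies_carrier: "B \<in> carrier_mat k k \<Longrightarrow> diag_copies n B \<in> carrier_mat (k * n) (k * n)"
  by (induction n) auto

lemma diag_copies_index:
  assumes B: "B \<in> carrier_mat k k" and "i < k * n" and "j < k * n"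
  shows "diag_copies n B $$ (i, j) = (if i div k = j div k then B $$ (i mod k, j mod k) else 0)"
  using assms(2,3)
proof (induction n arbitrary: i j)
  case (Suc n)
  have D: "diag_copies n B \<in> carrier_mat (k * n) (k * n)"
    using B by (rule diag_copies_carrier)
  have "0 < k" using Suc.prems by (cases k) auto
  have kB: "dim_row B = k" "dim_col B = k" using B by auto
  consider "i < k" "j < k" | "i < k" "\<not> j < k" | "\<not> i < k" "j < k" | "\<not> i < k" "\<not> j < k" by blast
  then show ?case
  proof cases
    case 4
    then have "i div k = Suc ((i - k) div k)" "j div k = Suc ((j - k) div k)"
      "i mod k = (i - k) mod k" "j mod k = (j - k) mod k"
      using \<open>0 < k\<close> by (simp_all add: le_div_geq le_mod_geq)
    with 4 show ?thesis
      using B D Suc.prems by (simp add: kB Suc.IH)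
  qed (use B D Suc.prems \<open>0 < k\<close> in \<open>auto simp: kB div_eq_0_iff\<close>)
qed simp

lemma det_char_diag_copies:
  fixes B :: "'a::idom mat"
  assumes B: "B \<in> carrier_mat k k"
  shows "det (x \<cdot>\<^sub>m 1\<^sub>m (k * n) - diag_copies n B) = det (x \<cdot>\<^sub>m 1\<^sub>m k - B) ^ n"
proof (induction n)
  case (Suc n)
  have "det (x \<cdot>\<^sub>m 1\<^sub>m (k + k * n) - diag_copies (Suc n) B) =
      det (x \<cdot>\<^sub>m 1\<^sub>m k - B) * det (x \<cdot>\<^sub>m 1\<^sub>m (k * n) - diag_copies n B)"
    using B by (simp, rule det_char_four_block_lower_left_zero) (auto intro: diag_copies_carrier)
  then show ?case using Suc.IH by simp
qed (subst det_dim_zero, auto)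

lemma det_char_antidiagonal_blocks:
  fixes B C :: "'a::idom mat"
  assumes B: "B \<in> carrier_mat n n" and C: "C \<in> carrier_mat n n"
  shows "det (x \<cdot>\<^sub>m 1\<^sub>m (n + n) - four_block_mat (0\<^sub>m n n) B C (0\<^sub>m n n)) =
    det ((x * x) \<cdot>\<^sub>m 1\<^sub>m n - B * C)"
proof -
  have "x \<cdot>\<^sub>m 1\<^sub>m (n + n) - four_block_mat (0\<^sub>m n n) B C (0\<^sub>m n n) =
      four_block_mat (x \<cdot>\<^sub>m 1\<^sub>m n) (- B) (- C) (x \<cdot>\<^sub>m 1\<^sub>m n)"
    by (rule eq_matI) (use B C in auto)
  moreover have "(- C) * (x \<cdot>\<^sub>m 1\<^sub>m n) = x \<cdot>\<^sub>m (- C)"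
    using C by (subst mult_smult_distrib[of _ n n]) auto
  moreover have "(x \<cdot>\<^sub>m 1\<^sub>m n) * (- C) = x \<cdot>\<^sub>m (- C)"
    using C by (subst mult_smult_assoc_mat[of _ n n]) auto
  moreover have "(x \<cdot>\<^sub>m 1\<^sub>m n) * (x \<cdot>\<^sub>m 1\<^sub>m n) = (x * x) \<cdot>\<^sub>m 1\<^sub>m n"
    by (subst mult_smult_distrib[of _ n n]) auto
  ultimately show ?thesis
    using B C by (simp add: det_four_block_mat[of _ n])
qed

lemma poly_char_poly_eq_det:
  fixes A :: "'a::field mat"
  assumes A: "A \<in> carrier_mat n n"
  shows "poly (char_poly A) x = det (x \<cdot>\<^sub>m 1\<^sub>m n - A)"
proof -
  have "- char_matrix A x = x \<cdot>\<^sub>m 1\<^sub>m n - A"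
    by (rule eq_matI) (use A in \<open>auto simp: char_matrix_def\<close>)
  then show ?thesis
    using char_poly_matrix[OF A] by simp
qed

section \<open>Second derivatives of cubic forms\<close>

definition ebasis :: "nat \<Rightarrow> nat \<Rightarrow> 'a::zero_neq_one" where
  "ebasis j = (\<lambda>i. if i = j then 1 else 0)"

lemma rderiv_cubic_at_0: "rderiv (\<lambda>t. c0 + t * c1 + t ^ 2 * c2 + t ^ 3 * c3) 0 = c1"
proof -
  have deriv: "((\<lambda>t. c0 + t * c1 + t ^ 2 * c2 + t ^ 3 * c3) has_real_derivative c1) (at 0)"
    by (auto intro!: derivative_eq_intros)
  show ?thesis
    unfolding rderiv_def by (rule the_equality) (use deriv DERIV_unique in auto)
qed

lemma hess_entry_diagonal_trilinear:
  fixes T :: "(nat \<Rightarrow> real) \<Rightarrow> (nat \<Rightarrow> real) \<Rightarrow> (nat \<Rightarrow> real) \<Rightarrow> real"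
  assumes lin1: "\<And>p q r w t. T (\<lambda>k. p k + t * q k) r w = T p r w + t * T q r w"
    and lin2: "\<And>p q r w t. T r (\<lambda>k. p k + t * q k) w = T r p w + t * T r q w"
    and lin3: "\<And>p q r w t. T r w (\<lambda>k. p k + t * q k) = T r w p + t * T r w q"
  shows "hess_entry (\<lambda>a. T a a a) a i j =
    T (ebasis j) (ebasis i) a + T (ebasis j) a (ebasis i) + T (ebasis i) (ebasis j) a
    + T a (ebasis j) (ebasis i) + T (ebasis i) a (ebasis j) + T a (ebasis i) (ebasis j)"
proof -
  let ?e = "ebasis :: nat \<Rightarrow> nat \<Rightarrow> real"
  define b where "b s = (\<lambda>k. a k + s * ?e i k)" for s
  have inner: "rderiv (\<lambda>t. (\<lambda>a. T a a a) (\<lambda>k. a k + (if k = i then s else 0) + (if k = j then t else 0))) 0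
      = T (?e j) (b s) (b s) + T (b s) (?e j) (b s) + T (b s) (b s) (?e j)" for s
  proof -
    have shift: "(\<lambda>k. a k + (if k = i then s else 0) + (if k = j then t else 0)) = (\<lambda>k. b s k + t * ?e j k)" for t
      by (auto simp: b_def ebasis_def)
    have "(\<lambda>t. (\<lambda>a. T a a a) (\<lambda>k. a k + (if k = i then s else 0) + (if k = j then t else 0))) =
      (\<lambda>t. T (b s) (b s) (b s) + t * (T (?e j) (b s) (b s) + T (b s) (?e j) (b s) + T (b s) (b s) (?e j))
        + t ^ 2 * (T (?e j) (?e j) (b s) + T (?e j) (b s) (?e j) + T (b s) (?e j) (?e j)) + t ^ 3 * T (?e j) (?e j) (?e j))"
      unfolding shift by (simp only: lin1 lin2 lin3) (simp add: algebra_simps power2_eq_square power3_eq_cube)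
    then show ?thesis by (simp only: rderiv_cubic_at_0)
  qed
  have "(\<lambda>s. T (?e j) (b s) (b s) + T (b s) (?e j) (b s) + T (b s) (b s) (?e j)) =
    (\<lambda>s. (T (?e j) a a + T a (?e j) a + T a a (?e j))
      + s * (T (?e j) (?e i) a + T (?e j) a (?e i) + T (?e i) (?e j) a + T a (?e j) (?e i) + T (?e i) a (?e j) + T a (?e i) (?e j))
      + s ^ 2 * (T (?e j) (?e i) (?e i) + T (?e i) (?e j) (?e i) + T (?e i) (?e i) (?e j)) + s ^ 3 * 0)"
    unfolding b_def by (simp only: lin1 lin2 lin3) (simp add: algebra_simps power2_eq_square)
  then show ?thesis
    unfolding hess_entry_def inner by (simp only: rderiv_cubic_at_0)
qed

section \<open>Octonions in coordinates\<close>

text \<open>Octonions over an arbitrary commutative ring, as coefficient functions of which only the first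
  eight values are read.\<close>

definition oct_mult :: "(nat \<Rightarrow> 'a::comm_ring_1) \<Rightarrow> (nat \<Rightarrow> 'a) \<Rightarrow> nat \<Rightarrow> 'a" where
  "oct_mult p q k = (if k = 0 then p 0 * q 0 - p 1 * q 1 - p 2 * q 2 - p 3 * q 3 - p 4 * q 4 - p 5 * q 5 - p 6 * q 6 - p 7 * q 7
   else if k = 1 then p 0 * q 1 + p 1 * q 0 + p 2 * q 4 + p 3 * q 7 - p 4 * q 2 + p 5 * q 6 - p 6 * q 5 - p 7 * q 3
   else if k = 2 then p 0 * q 2 - p 1 * q 4 + p 2 * q 0 + p 3 * q 5 + p 4 * q 1 - p 5 * q 3 + p 6 * q 7 - p 7 * q 6
   else if k = 3 then p 0 * q 3 - p 1 * q 7 - p 2 * q 5 + p 3 * q 0 + p 4 * q 6 + p 5 * q 2 - p 6 * q 4 + p 7 * q 1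
   else if k = 4 then p 0 * q 4 + p 1 * q 2 - p 2 * q 1 - p 3 * q 6 + p 4 * q 0 + p 5 * q 7 + p 6 * q 3 - p 7 * q 5
   else if k = 5 then p 0 * q 5 - p 1 * q 6 + p 2 * q 3 - p 3 * q 2 - p 4 * q 7 + p 5 * q 0 + p 6 * q 1 + p 7 * q 4
   else if k = 6 then p 0 * q 6 + p 1 * q 5 - p 2 * q 7 + p 3 * q 4 - p 4 * q 3 - p 5 * q 1 + p 6 * q 0 + p 7 * q 2
   else if k = 7 then p 0 * q 7 + p 1 * q 3 + p 2 * q 6 - p 3 * q 1 + p 4 * q 5 - p 5 * q 4 - p 6 * q 2 + p 7 * q 0
   else 0)"

definition oct_cnj :: "(nat \<Rightarrow> 'a::comm_ring_1) \<Rightarrow> nat \<Rightarrow> 'a" where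
  "oct_cnj p k = (if k = 0 then p 0 else - p k)"

definition oct_inner :: "(nat \<Rightarrow> 'a::comm_ring_1) \<Rightarrow> (nat \<Rightarrow> 'a) \<Rightarrow> 'a" where
  "oct_inner p q = p 0 * q 0 + p 1 * q 1 + p 2 * q 2 + p 3 * q 3 + p 4 * q 4 + p 5 * q 5 + p 6 * q 6 + p 7 * q 7"

lemma less_8_cases: "(k::nat) < 8 \<Longrightarrow> k = 0 \<or> k = 1 \<or> k = 2 \<or> k = 3 \<or> k = 4 \<or> k = 5 \<or> k = 6 \<or> k = 7"
  by presburger

lemma sum_lessThan_8: "(\<Sum>i<8. f i) = f 0 + f 1 + f 2 + f 3 + f 4 + f 5 + f 6 + f (7::nat)"
  by (simp add: numeral_eq_Suc lessThan_Suc add_ac)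

lemma oct_mult_cong:
  assumes "\<And>i. i < 8 \<Longrightarrow> p i = p' i" and "\<And>i. i < 8 \<Longrightarrow> q i = q' i"
  shows "oct_mult p q k = oct_mult p' q' k"
  unfolding oct_mult_def using assms by simp

lemma oct_mult_bilinear_expansion:
  fixes p q :: "nat \<Rightarrow> 'a::comm_ring_1"
  shows "oct_mult p q k = (\<Sum>i<8. \<Sum>j<8. p i * q j * oct_mult (ebasis i) (ebasis j) k)"
proof (cases "k < 8")
  case True
  then show ?thesis
    by (elim less_8_cases[elim_format] disjE; simp add: sum_lessThan_8 oct_mult_def ebasis_def algebra_simps)
qed (simp add: oct_mult_def)

lemma bex_atLeastAtMost_1_7: "(\<exists>t\<in>{1..7::nat}. P t) \<longleftrightarrow> P 1 \<or> P 2 \<or> P 3 \<or> P 4 \<or> P 5 \<or> P 6 \<or> P 7"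
proof
  assume "\<exists>t\<in>{1..7::nat}. P t"
  then obtain t where "t \<in> {1..7}" "P t" by blast
  then have "t = 1 \<or> t = 2 \<or> t = 3 \<or> t = 4 \<or> t = 5 \<or> t = 6 \<or> t = 7" by auto
  then show "P 1 \<or> P 2 \<or> P 3 \<or> P 4 \<or> P 5 \<or> P 6 \<or> P 7" using \<open>P t\<close> by blast
qed auto

lemma opos_iff:
  "opos i j k \<longleftrightarrow>
    (i = 1 \<and> j = 2 \<and> k = 4) \<or> (i = 2 \<and> j = 4 \<and> k = 1) \<or> (i = 4 \<and> j = 1 \<and> k = 2) \<or>
    (i = 2 \<and> j = 3 \<and> k = 5) \<or> (i = 3 \<and> j = 5 \<and> k = 2) \<or> (i = 5 \<and> j = 2 \<and> k = 3) \<or>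
    (i = 3 \<and> j = 4 \<and> k = 6) \<or> (i = 4 \<and> j = 6 \<and> k = 3) \<or> (i = 6 \<and> j = 3 \<and> k = 4) \<or>
    (i = 4 \<and> j = 5 \<and> k = 7) \<or> (i = 5 \<and> j = 7 \<and> k = 4) \<or> (i = 7 \<and> j = 4 \<and> k = 5) \<or>
    (i = 5 \<and> j = 6 \<and> k = 1) \<or> (i = 6 \<and> j = 1 \<and> k = 5) \<or> (i = 1 \<and> j = 5 \<and> k = 6) \<or>
    (i = 6 \<and> j = 7 \<and> k = 2) \<or> (i = 7 \<and> j = 2 \<and> k = 6) \<or> (i = 2 \<and> j = 6 \<and> k = 7) \<or>
    (i = 7 \<and> j = 1 \<and> k = 3) \<or> (i = 1 \<and> j = 3 \<and> k = 7) \<or> (i = 3 \<and> j = 7 \<and> k = 1)"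
  unfolding opos_def bex_atLeastAtMost_1_7
  by (simp add: onorm7_def, simp add: numeral_eq_Suc onorm7_def)

lemma octc_eq_oct_mult_ebasis:
  assumes "i < 8" "j < 8" "k < 8"
  shows "octc i j k = oct_mult (ebasis i) (ebasis j) k"
  using assms by (elim less_8_cases[elim_format] disjE; simp add: octc_def opos_iff oct_mult_def ebasis_def)

lemma omul_eq_oct_mult:
  assumes "k < 8"
  shows "omul p q k = oct_mult p q k"
proof -
  have "omul p q k = (\<Sum>i<8. \<Sum>j<8. p i * q j * oct_mult (ebasis i) (ebasis j) k)"
    unfolding omul_def using assms by (intro sum.cong refl) (simp add: octc_eq_oct_mult_ebasis)
  then show ?thesis
    unfolding oct_mult_bilinear_expansion[of p q k] .
qed

section \<open>The cubic form and its Hessian\<close>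

definition xcoord :: "(nat \<Rightarrow> 'a::comm_ring_1) \<Rightarrow> nat \<Rightarrow> 'a" where
  "xcoord a = (\<lambda>i. if i < 8 then a i else 0)"

definition ycoord :: "(nat \<Rightarrow> 'a::comm_ring_1) \<Rightarrow> nat \<Rightarrow> 'a" where
  "ycoord a = (\<lambda>i. if i < 8 then a (8 + i) else 0)"

definition zcoord :: "(nat \<Rightarrow> 'a::comm_ring_1) \<Rightarrow> nat \<Rightarrow> 'a" where
  "zcoord a = (\<lambda>i. if i < 8 then a (16 + i) else 0)"

definition join3 :: "(nat \<Rightarrow> 'a::comm_ring_1) \<Rightarrow> (nat \<Rightarrow> 'a) \<Rightarrow> (nat \<Rightarrow> 'a) \<Rightarrow> nat \<Rightarrow> 'a" where
  "join3 u v w = (\<lambda>i. if i < 8 then u i else if i < 16 then v (i - 8) else if i < 24 then w (i - 16) else 0)"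

definition oct_trilinear :: "(nat \<Rightarrow> 'a::comm_ring_1) \<Rightarrow> (nat \<Rightarrow> 'a) \<Rightarrow> (nat \<Rightarrow> 'a) \<Rightarrow> 'a" where
  "oct_trilinear p q r = oct_mult (oct_mult (xcoord p) (ycoord q)) (zcoord r) 0"

definition oct_cubic :: "(nat \<Rightarrow> 'a::comm_ring_1) \<Rightarrow> 'a" where
  "oct_cubic a = oct_trilinear a a a"

definition sqnorm24 :: "(nat \<Rightarrow> 'a::comm_ring_1) \<Rightarrow> 'a" where
  "sqnorm24 a = oct_inner (xcoord a) (xcoord a) + oct_inner (ycoord a) (ycoord a) + oct_inner (zcoord a) (zcoord a)"

definition hess_apply :: "(nat \<Rightarrow> 'a::comm_ring_1) \<Rightarrow> (nat \<Rightarrow> 'a) \<Rightarrow> nat \<Rightarrow> 'a" where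
  "hess_apply a v = join3
     (\<lambda>k. oct_cnj (oct_mult (ycoord v) (zcoord a)) k + oct_cnj (oct_mult (ycoord a) (zcoord v)) k)
     (\<lambda>k. oct_cnj (oct_mult (zcoord a) (xcoord v)) k + oct_cnj (oct_mult (zcoord v) (xcoord a)) k)
     (\<lambda>k. oct_cnj (oct_mult (xcoord v) (ycoord a)) k + oct_cnj (oct_mult (xcoord a) (ycoord v)) k)"

definition hess_mat :: "(nat \<Rightarrow> 'a::comm_ring_1) \<Rightarrow> 'a mat" where
  "hess_mat a = mat 24 24 (\<lambda>(i, j). hess_apply a (ebasis j) i)"

lemmas oct_defs = oct_mult_def oct_cnj_def oct_inner_def xcoord_def ycoord_def zcoord_def join3_def
  hess_apply_def

lemma less_24_cases:
  "(i::nat) < 24 \<Longrightarrow> i = 0 \<or> i = 1 \<or> i = 2 \<or> i = 3 \<or> i = 4 \<or> i = 5 \<or> i = 6 \<or> i = 7 \<or> i = 8 \<or> i = 9 \<or>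
    i = 10 \<or> i = 11 \<or> i = 12 \<or> i = 13 \<or> i = 14 \<or> i = 15 \<or> i = 16 \<or> i = 17 \<or> i = 18 \<or> i = 19 \<or>
    i = 20 \<or> i = 21 \<or> i = 22 \<or> i = 23"
  by presburger

lemma sum_atLeast0_lessThan_24: "(\<Sum>i = 0..<24. f i) = f 0 + f 1 + f 2 + f 3 + f 4 + f 5 + f 6 + f 7 + f 8 + f 9 + f 10 + f 11
  + f 12 + f 13 + f 14 + f 15 + f 16 + f 17 + f 18 + f 19 + f 20 + f 21 + f 22 + f (23::nat)"
  by (simp add: numeral_eq_Suc atLeast0_lessThan_Suc add_ac)

lemma Pcub_eq_oct_cubic: "Pcub a = oct_cubic a"
proof -
  have coords: "xpart a = xcoord a" "ypart a = ycoord a" "zpart a = zcoord a"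
    by (auto simp: fun_eq_iff xpart_def ypart_def zpart_def xcoord_def ycoord_def zcoord_def)
  have "Pcub a = oct_mult (omul (xcoord a) (ycoord a)) (zcoord a) 0"
    unfolding Pcub_def coords by (rule omul_eq_oct_mult) simp
  also have "\<dots> = oct_cubic a"
    unfolding oct_cubic_def oct_trilinear_def by (rule oct_mult_cong) (simp_all add: omul_eq_oct_mult)
  finally show ?thesis .
qed

lemma oct_trilinear_linear:
  fixes p q r w :: "nat \<Rightarrow> 'a::comm_ring_1"
  shows "oct_trilinear (\<lambda>k. p k + t * q k) r w = oct_trilinear p r w + t * oct_trilinear q r w"
    and "oct_trilinear r (\<lambda>k. p k + t * q k) w = oct_trilinear r p w + t * oct_trilinear r q w"
    and "oct_trilinear r w (\<lambda>k. p k + t * q k) = oct_trilinear r w p + t * oct_trilinear r w q"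
  by (simp_all add: oct_trilinear_def oct_defs algebra_simps)

lemma hess_apply_polarization:
  fixes a v :: "nat \<Rightarrow> 'a::comm_ring_1"
  assumes "i < 24"
  shows "hess_apply a v i = oct_trilinear v (ebasis i) a + oct_trilinear v a (ebasis i) + oct_trilinear (ebasis i) v a
    + oct_trilinear a v (ebasis i) + oct_trilinear (ebasis i) a v + oct_trilinear a (ebasis i) v"
  using assms by (elim less_24_cases[elim_format] disjE; simp add: oct_trilinear_def ebasis_def oct_defs algebra_simps)

lemma hess_entry_oct_cubic:
  "hess_entry oct_cubic a i j =
    oct_trilinear (ebasis j) (ebasis i) a + oct_trilinear (ebasis j) a (ebasis i) + oct_trilinear (ebasis i) (ebasis j) a
    + oct_trilinear a (ebasis j) (ebasis i) + oct_trilinear (ebasis i) a (ebasis j) + oct_trilinear a (ebasis i) (ebasis j)"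
  unfolding oct_cubic_def[abs_def] by (rule hess_entry_diagonal_trilinear) (fact oct_trilinear_linear)+

lemma hessian_eq_hess_mat: "hessian 24 Pcub a = hess_mat a"
proof -
  have "Pcub = oct_cubic"
    by (rule ext) (rule Pcub_eq_oct_cubic)
  then show ?thesis
    unfolding hessian_def hess_mat_def
    by (intro eq_matI) (auto simp: hess_entry_oct_cubic hess_apply_polarization)
qed

lemma hess_apply_sum_ebasis:
  fixes a v :: "nat \<Rightarrow> 'a::comm_ring_1"
  assumes "l < 24"
  shows "(\<Sum>i = 0..<24. hess_apply a (ebasis i) l * v i) = hess_apply a v l"
  using assms by (elim less_24_cases[elim_format] disjE; simp add: sum_atLeast0_lessThan_24 ebasis_def oct_defs; (simp add: algebra_simps)?)

section \<open>Invariant subspaces of the Hessian\<close>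

definition proj_x :: "(nat \<Rightarrow> 'a::comm_ring_1) \<Rightarrow> nat \<Rightarrow> 'a" where
  "proj_x a = join3 (xcoord a) (\<lambda>_. 0) (\<lambda>_. 0)"

definition proj_y :: "(nat \<Rightarrow> 'a::comm_ring_1) \<Rightarrow> nat \<Rightarrow> 'a" where
  "proj_y a = join3 (\<lambda>_. 0) (ycoord a) (\<lambda>_. 0)"

definition proj_z :: "(nat \<Rightarrow> 'a::comm_ring_1) \<Rightarrow> nat \<Rightarrow> 'a" where
  "proj_z a = join3 (\<lambda>_. 0) (\<lambda>_. 0) (zcoord a)"

definition grad_x :: "(nat \<Rightarrow> 'a::comm_ring_1) \<Rightarrow> nat \<Rightarrow> 'a" where
  "grad_x a = join3 (oct_cnj (oct_mult (ycoord a) (zcoord a))) (\<lambda>_. 0) (\<lambda>_. 0)"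

definition grad_y :: "(nat \<Rightarrow> 'a::comm_ring_1) \<Rightarrow> nat \<Rightarrow> 'a" where
  "grad_y a = join3 (\<lambda>_. 0) (oct_cnj (oct_mult (zcoord a) (xcoord a))) (\<lambda>_. 0)"

definition grad_z :: "(nat \<Rightarrow> 'a::comm_ring_1) \<Rightarrow> nat \<Rightarrow> 'a" where
  "grad_z a = join3 (\<lambda>_. 0) (\<lambda>_. 0) (oct_cnj (oct_mult (xcoord a) (ycoord a)))"

definition krylov0 :: "(nat \<Rightarrow> 'a::comm_ring_1) \<Rightarrow> nat \<Rightarrow> 'a" where
  "krylov0 u = join3 u (\<lambda>_. 0) (\<lambda>_. 0)"

definition krylov1 :: "(nat \<Rightarrow> 'a::comm_ring_1) \<Rightarrow> (nat \<Rightarrow> 'a) \<Rightarrow> nat \<Rightarrow> 'a" where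
  "krylov1 a u = join3 (\<lambda>_. 0) (oct_cnj (oct_mult (zcoord a) u)) (oct_cnj (oct_mult u (ycoord a)))"

definition krylov2 :: "(nat \<Rightarrow> 'a::comm_ring_1) \<Rightarrow> (nat \<Rightarrow> 'a) \<Rightarrow> nat \<Rightarrow> 'a" where
  "krylov2 a u = join3
     (\<lambda>k. (oct_inner (ycoord a) (ycoord a) + oct_inner (zcoord a) (zcoord a)) * u k)
     (oct_mult (oct_cnj (xcoord a)) (oct_mult u (ycoord a)))
     (oct_mult (oct_mult (zcoord a) u) (oct_cnj (xcoord a)))"

lemmas invariant_defs = proj_x_def proj_y_def proj_z_def grad_x_def grad_y_def grad_z_def
  krylov0_def krylov1_def krylov2_def oct_cubic_def oct_trilinear_def sqnorm24_def

lemma hess_apply_proj: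
  fixes a :: "nat \<Rightarrow> 'a::comm_ring_1"
  assumes "i < 24"
  shows "hess_apply a (proj_x a) i = grad_y a i + grad_z a i"
    and "hess_apply a (proj_y a) i = grad_x a i + grad_z a i"
    and "hess_apply a (proj_z a) i = grad_x a i + grad_y a i"
  using assms
  by (elim less_24_cases[elim_format] disjE; simp add: invariant_defs oct_defs; (simp add: algebra_simps)?)+

lemma hess_apply_grad:
  fixes a :: "nat \<Rightarrow> 'a::comm_ring_1"
  assumes "i < 24"
  shows "hess_apply a (grad_x a) i = oct_inner (zcoord a) (zcoord a) * proj_y a i + oct_inner (ycoord a) (ycoord a) * proj_z a i"
    and "hess_apply a (grad_y a) i = oct_inner (zcoord a) (zcoord a) * proj_x a i + oct_inner (xcoord a) (xcoord a) * proj_z a i"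
    and "hess_apply a (grad_z a) i = oct_inner (ycoord a) (ycoord a) * proj_x a i + oct_inner (xcoord a) (xcoord a) * proj_y a i"
  using assms
  by (elim less_24_cases[elim_format] disjE; simp add: invariant_defs oct_defs; (simp add: algebra_simps)?)+

lemma hess_apply_krylov0:
  fixes a u :: "nat \<Rightarrow> 'a::comm_ring_1"
  assumes "i < 24"
  shows "hess_apply a (krylov0 u) i = krylov1 a u i"
  using assms by (elim less_24_cases[elim_format] disjE; simp add: invariant_defs oct_defs)

text \<open>The alternative laws of the octonions enter in the identities for \<open>krylov1\<close> and \<open>krylov2\<close>.\<close>

lemma hess_apply_krylov1:
  fixes a u :: "nat \<Rightarrow> 'a::comm_ring_1"
  assumes "i < 24"
  shows "hess_apply a (krylov1 a u) i = krylov2 a u i"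
  using assms
  by (elim less_24_cases[elim_format] disjE; simp add: invariant_defs oct_defs; (simp add: algebra_simps)?)

lemma less_6_cases: "(k::nat) < 6 \<Longrightarrow> k = 0 \<or> k = 1 \<or> k = 2 \<or> k = 3 \<or> k = 4 \<or> k = 5"
  by presburger

lemma hess_apply_krylov2_x:
  fixes a :: "nat \<Rightarrow> 'a::comm_ring_1"
  assumes "k < 6" and "i < 8"
  shows "hess_apply a (krylov2 a (ebasis k)) i = sqnorm24 a * krylov1 a (ebasis k) i - 2 * oct_cubic a * krylov0 (ebasis k) i
    + 2 * oct_cnj (oct_mult (ycoord a) (zcoord a)) k * proj_x a i + 2 * xcoord a k * grad_x a i"
  using assms
  by (elim less_6_cases[elim_format] less_8_cases[elim_format] disjE;
      simp add: invariant_defs oct_defs ebasis_def; (simp add: algebra_simps)?)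

lemma hess_apply_krylov2_y:
  fixes a :: "nat \<Rightarrow> 'a::comm_ring_1"
  assumes "k < 6" and "i < 8"
  shows "hess_apply a (krylov2 a (ebasis k)) (8 + i) = sqnorm24 a * krylov1 a (ebasis k) (8 + i) - 2 * oct_cubic a * krylov0 (ebasis k) (8 + i)
    + 2 * oct_cnj (oct_mult (ycoord a) (zcoord a)) k * proj_x a (8 + i) + 2 * xcoord a k * grad_x a (8 + i)"
  using assms
  by (elim less_6_cases[elim_format] less_8_cases[elim_format] disjE;
      simp add: invariant_defs oct_defs ebasis_def; (simp add: algebra_simps)?)

lemma hess_apply_krylov2_z:
  fixes a :: "nat \<Rightarrow> 'a::comm_ring_1"
  assumes "k < 6" and "i < 8"
  shows "hess_apply a (krylov2 a (ebasis k)) (16 + i) = sqnorm24 a * krylov1 a (ebasis k) (16 + i) - 2 * oct_cubic a * krylov0 (ebasis k) (16 + i)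
    + 2 * oct_cnj (oct_mult (ycoord a) (zcoord a)) k * proj_x a (16 + i) + 2 * xcoord a k * grad_x a (16 + i)"
  using assms
  by (elim less_6_cases[elim_format] less_8_cases[elim_format] disjE;
      simp add: invariant_defs oct_defs ebasis_def; (simp add: algebra_simps)?)

lemma hess_apply_krylov2:
  fixes a :: "nat \<Rightarrow> 'a::comm_ring_1"
  assumes "k < 6" and "i < 24"
  shows "hess_apply a (krylov2 a (ebasis k)) i = sqnorm24 a * krylov1 a (ebasis k) i - 2 * oct_cubic a * krylov0 (ebasis k) i
    + 2 * oct_cnj (oct_mult (ycoord a) (zcoord a)) k * proj_x a i + 2 * xcoord a k * grad_x a i"
proof -
  consider "i < 8" | "8 \<le> i" "i < 16" | "16 \<le> i"
    by linarith
  then show ?thesis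
  proof cases
    case 1
    then show ?thesis using hess_apply_krylov2_x[OF assms(1)] by blast
  next
    case 2
    then have "i - 8 < 8" and i: "8 + (i - 8) = i" by simp_all
    from hess_apply_krylov2_y[OF assms(1) this(1), of a, unfolded i] show ?thesis .
  next
    case 3
    then have "i - 16 < 8" and i: "16 + (i - 16) = i" using assms(2) by simp_all
    from hess_apply_krylov2_z[OF assms(1) this(1), of a, unfolded i] show ?thesis .
  qed
qed

definition krylov_basis :: "(nat \<Rightarrow> 'a::comm_ring_1) \<Rightarrow> nat \<Rightarrow> nat \<Rightarrow> 'a" where
  "krylov_basis a j =
    (if j < 6 then [proj_x a, proj_y a, proj_z a, grad_x a, grad_y a, grad_z a] ! j
     else [krylov0 (ebasis ((j - 6) div 3)), krylov1 a (ebasis ((j - 6) div 3)),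
           krylov2 a (ebasis ((j - 6) div 3))] ! ((j - 6) mod 3))"

definition krylov_mat :: "(nat \<Rightarrow> 'a::comm_ring_1) \<Rightarrow> 'a mat" where
  "krylov_mat a = mat 24 24 (\<lambda>(i, j). krylov_basis a j i)"

text \<open>The matrix of the Hessian in the basis \<open>krylov_basis\<close>. In the upper right block of its
  leading \<open>6 \<times> 6\<close> block, \<open>3 - i - j\<close> is the index distinct from \<open>i\<close> and \<open>j\<close>.\<close>

definition reduced_mat :: "(nat \<Rightarrow> 'a::comm_ring_1) \<Rightarrow> 'a mat" where
  "reduced_mat a = four_block_mat
     (four_block_mat (0\<^sub>m 3 3)
        (mat 3 3 (\<lambda>(i, j). if i = j then 0
           else [oct_inner (xcoord a) (xcoord a), oct_inner (ycoord a) (ycoord a), oct_inner (zcoord a) (zcoord a)] ! (3 - i - j)))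
        (mat 3 3 (\<lambda>(i, j). if i = j then 0 else 1)) (0\<^sub>m 3 3))
     (mat 6 18 (\<lambda>(i, j). if j mod 3 = 2 \<and> i = 0 then 2 * oct_cnj (oct_mult (ycoord a) (zcoord a)) (j div 3)
        else if j mod 3 = 2 \<and> i = 3 then 2 * xcoord a (j div 3) else 0))
     (0\<^sub>m 18 6)
     (diag_copies 6 (companion3 (- 2 * oct_cubic a) (sqnorm24 a) 0))"

lemma dim_reduced_mat [simp]: "dim_row (reduced_mat a) = 24" "dim_col (reduced_mat a) = 24"
  by (simp_all add: reduced_mat_def companion3_def)

lemma reduced_mat_carrier: "reduced_mat a \<in> carrier_mat 24 24"
  by (intro carrier_matI) simp_all

lemma hess_mat_carrier: "hess_mat a \<in> carrier_mat 24 24"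
  by (simp add: hess_mat_def)

lemma hess_mat_mult_krylov_mat:
  fixes a :: "nat \<Rightarrow> 'a::comm_ring_1"
  shows "hess_mat a * krylov_mat a = krylov_mat a * reduced_mat a"
proof (rule eq_matI)
  fix l j
  assume "l < dim_row (krylov_mat a * reduced_mat a)" and "j < dim_col (krylov_mat a * reduced_mat a)"
  then have l: "l < 24" and j: "j < 24"
    by (simp_all add: krylov_mat_def)
  have left: "(hess_mat a * krylov_mat a) $$ (l, j) = hess_apply a (krylov_basis a j) l"
    using l j by (simp add: hess_mat_def krylov_mat_def scalar_prod_def hess_apply_sum_ebasis)
  have right: "(krylov_mat a * reduced_mat a) $$ (l, j) = (\<Sum>i = 0..<24. krylov_basis a i l * reduced_mat a $$ (i, j))"
    using l j by (simp add: krylov_mat_def scalar_prod_def)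
  show "(hess_mat a * krylov_mat a) $$ (l, j) = (krylov_mat a * reduced_mat a) $$ (l, j)"
    unfolding left right using j
    by (elim less_24_cases[elim_format] disjE;
        simp add: l sum_atLeast0_lessThan_24 krylov_basis_def reduced_mat_def diag_copies_index[where k = 3]
          companion3_def hess_apply_proj hess_apply_grad hess_apply_krylov0 hess_apply_krylov1 hess_apply_krylov2;
        (simp add: algebra_simps)?)
qed (simp_all add: hess_mat_def krylov_mat_def)

lemma sum_atLeast0_lessThan_3: "(\<Sum>i = 0..<3. f i) = f 0 + f 1 + f (2::nat)"
  by (simp add: numeral_eq_Suc atLeast0_lessThan_Suc add_ac)

definition hess_char_value :: "(nat \<Rightarrow> 'a::comm_ring_1) \<Rightarrow> 'a \<Rightarrow> 'a" where
  "hess_char_value a x =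
    ((x ^ 3 - sqnorm24 a * x) ^ 2
      - 4 * (oct_inner (xcoord a) (xcoord a) * oct_inner (ycoord a) (ycoord a) * oct_inner (zcoord a) (zcoord a)))
    * (x ^ 3 - sqnorm24 a * x + 2 * oct_cubic a) ^ 6"

lemma det_char_reduced_mat:
  fixes a :: "nat \<Rightarrow> 'a::idom"
  shows "det (x \<cdot>\<^sub>m 1\<^sub>m 24 - reduced_mat a) = hess_char_value a x"
proof -
  define B :: "'a mat" where "B = mat 3 3 (\<lambda>(i, j). if i = j then 0
    else [oct_inner (xcoord a) (xcoord a), oct_inner (ycoord a) (ycoord a), oct_inner (zcoord a) (zcoord a)] ! (3 - i - j))"
  define C :: "'a mat" where "C = mat 3 3 (\<lambda>(i, j). if i = j then 0 else 1)"
  let ?K = "companion3 (- 2 * oct_cubic a) (sqnorm24 a) 0"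
  have "det (x \<cdot>\<^sub>m 1\<^sub>m (6 + 18) - reduced_mat a) =
      det (x \<cdot>\<^sub>m 1\<^sub>m 6 - four_block_mat (0\<^sub>m 3 3) B C (0\<^sub>m 3 3)) * det (x \<cdot>\<^sub>m 1\<^sub>m 18 - diag_copies 6 ?K)"
    unfolding reduced_mat_def B_def C_def
    by (rule det_char_four_block_lower_left_zero) (auto intro: diag_copies_carrier simp: companion3_def)
  also have "det (x \<cdot>\<^sub>m 1\<^sub>m 6 - four_block_mat (0\<^sub>m 3 3) B C (0\<^sub>m 3 3)) = det ((x * x) \<cdot>\<^sub>m 1\<^sub>m 3 - B * C)"
    using det_char_antidiagonal_blocks[of B 3 C x] by (simp add: B_def C_def)
  also have "\<dots> = (x ^ 3 - sqnorm24 a * x) ^ 2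
      - 4 * (oct_inner (xcoord a) (xcoord a) * oct_inner (ycoord a) (ycoord a) * oct_inner (zcoord a) (zcoord a))"
    by (subst det_dim_3)
      (auto simp: B_def C_def scalar_prod_def sum_atLeast0_lessThan_3 sqnorm24_def algebra_simps power2_eq_square power3_eq_cube)
  also have "det (x \<cdot>\<^sub>m 1\<^sub>m 18 - diag_copies 6 ?K) = (x ^ 3 - sqnorm24 a * x + 2 * oct_cubic a) ^ 6"
    using det_char_diag_copies[of ?K 3 x 6] by (simp add: companion3_def det_char_companion3[unfolded companion3_def])
  finally show ?thesis by (simp add: hess_char_value_def)
qed

section \<open>Specialisation from the generic point\<close>

lemma comm_ring_hom_poly_eval: "comm_ring_hom (\<lambda>p :: 'a::comm_ring_1 poly. poly p c)"
  by unfold_locales auto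

context comm_ring_hom
begin

lemma hom_oct_mult: "hom (oct_mult p q k) = oct_mult (\<lambda>i. hom (p i)) (\<lambda>i. hom (q i)) k"
  unfolding oct_mult_def by (simp add: hom_distribs)

lemma hom_oct_cnj: "hom (oct_cnj p k) = oct_cnj (\<lambda>i. hom (p i)) k"
  unfolding oct_cnj_def by (simp add: hom_distribs)

lemma hom_oct_inner: "hom (oct_inner p q) = oct_inner (\<lambda>i. hom (p i)) (\<lambda>i. hom (q i))"
  unfolding oct_inner_def by (simp add: hom_distribs)

lemma hom_coords:
  "hom (xcoord a i) = xcoord (\<lambda>k. hom (a k)) i"
  "hom (ycoord a i) = ycoord (\<lambda>k. hom (a k)) i"
  "hom (zcoord a i) = zcoord (\<lambda>k. hom (a k)) i"
  "hom (join3 u v w i) = join3 (\<lambda>k. hom (u k)) (\<lambda>k. hom (v k)) (\<lambda>k. hom (w k)) i"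
  "hom (ebasis j i) = ebasis j i"
  by (simp_all add: xcoord_def ycoord_def zcoord_def join3_def ebasis_def)

lemmas hom_oct = hom_oct_mult hom_oct_cnj hom_oct_inner hom_coords

lemma hom_oct_cubic: "hom (oct_cubic a) = oct_cubic (\<lambda>k. hom (a k))"
  unfolding oct_cubic_def oct_trilinear_def by (simp add: hom_oct)

lemma hom_sqnorm24: "hom (sqnorm24 a) = sqnorm24 (\<lambda>k. hom (a k))"
  unfolding sqnorm24_def by (simp add: hom_oct hom_distribs)

lemma hom_hess_char_value: "hom (hess_char_value a x) = hess_char_value (\<lambda>k. hom (a k)) (hom x)"
  unfolding hess_char_value_def by (simp add: hom_distribs hom_sqnorm24 hom_oct_cubic hom_oct)

lemma hom_hess_mat: "map_mat hom (hess_mat a) = hess_mat (\<lambda>k. hom (a k))"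
  by (rule eq_matI) (auto simp: hess_mat_def hess_apply_def hom_oct hom_distribs)

lemma hom_krylov_mat: "map_mat hom (krylov_mat a) = krylov_mat (\<lambda>k. hom (a k))"
proof (rule eq_matI)
  fix i j
  assume "i < dim_row (krylov_mat (\<lambda>k. hom (a k)))" and "j < dim_col (krylov_mat (\<lambda>k. hom (a k)))"
  then have "i < 24" and "j < 24" by (simp_all add: krylov_mat_def)
  then show "map_mat hom (krylov_mat a) $$ (i, j) = krylov_mat (\<lambda>k. hom (a k)) $$ (i, j)"
    by (elim less_24_cases[of j, elim_format] disjE; simp add: krylov_mat_def krylov_basis_def invariant_defs hom_oct hom_distribs)
qed (simp_all add: krylov_mat_def)

lemma hom_char_mat:
  assumes "A \<in> carrier_mat n n"
  shows "map_mat hom (x \<cdot>\<^sub>m 1\<^sub>m n - A) = hom x \<cdot>\<^sub>m 1\<^sub>m n - map_mat hom A"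
  by (rule eq_matI) (use assms in \<open>auto simp: hom_distribs\<close>)

end

text \<open>The witness is the point \<open>(x, y, z) = (e\<^sub>6, 1, e\<^sub>7)\<close>.\<close>

lemma det_krylov_mat_witness:
  "det (krylov_mat (\<lambda>k. if k = 6 \<or> k = 8 \<or> k = 23 then 1 else 0 :: real)) \<noteq> 0"
    (is "det (krylov_mat ?b) \<noteq> 0")
proof
  assume "det (krylov_mat ?b) = 0"
  then obtain v where v: "v \<in> carrier_vec 24" "v \<noteq> 0\<^sub>v 24" "krylov_mat ?b *\<^sub>v v = 0\<^sub>v 24"
    using det_0_iff_vec_prod_zero[of "krylov_mat ?b" 24] by (auto simp: krylov_mat_def)
  have row: "(\<Sum>j = 0..<24. krylov_basis ?b j i * v $ j) = 0" if "i < 24" for i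
  proof -
    have "(krylov_mat ?b *\<^sub>v v) $ i = 0" using v(3) that by simp
    then show ?thesis
      using that v(1) by (simp add: krylov_mat_def mult_mat_vec_def scalar_prod_def)
  qed
  note rows = row[of 0] row[of 1] row[of 2] row[of 3] row[of 4] row[of 5] row[of 6] row[of 7] row[of 8]
    row[of 9] row[of 10] row[of 11] row[of 12] row[of 13] row[of 14] row[of 15] row[of 16] row[of 17]
    row[of 18] row[of 19] row[of 20] row[of 21] row[of 22] row[of 23]
  have "v $ j = 0" if "j < 24" for j
  proof -
    note [simp] = sum_atLeast0_lessThan_24 krylov_basis_def invariant_defs oct_defs ebasis_def
    show ?thesis
      using that rows[simplified, unfolded One_nat_def[symmetric]]
      by (elim less_24_cases[elim_format] disjE; hypsubst; linarith)
  qed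
  then have "v = 0\<^sub>v 24"
    using v(1) by (intro eq_vecI) auto
  with v(2) show False ..
qed

lemma det_char_hess_mat:
  fixes a :: "nat \<Rightarrow> real"
  shows "det (x \<cdot>\<^sub>m 1\<^sub>m 24 - hess_mat a) = hess_char_value a x"
proof -
  define b :: "nat \<Rightarrow> real" where "b = (\<lambda>k. if k = 6 \<or> k = 8 \<or> k = 23 then 1 else 0)"
  define g :: "nat \<Rightarrow> real poly" where "g k = [:a k, b k - a k:]" for k
    \<comment> \<open>the line from \<open>a\<close> (at \<open>t = 0\<close>) to \<open>b\<close> (at \<open>t = 1\<close>): the Krylov basis of \<open>g\<close> is
      nondegenerate even if that of \<open>a\<close> is not\<close>
  have eval0: "comm_ring_hom (\<lambda>p :: real poly. poly p 0)" and eval1: "comm_ring_hom (\<lambda>p :: real poly. poly p 1)"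
    by (rule comm_ring_hom_poly_eval)+
  have g0: "(\<lambda>k. poly (g k) 0) = a" and g1: "(\<lambda>k. poly (g k) 1) = b"
    by (auto simp: g_def)
  have "poly (det (krylov_mat g)) 1 = det (krylov_mat b)"
    using comm_ring_hom.hom_det[OF eval1, of "krylov_mat g"] comm_ring_hom.hom_krylov_mat[OF eval1, of g]
    by (simp add: g1)
  then have "det (krylov_mat g) \<noteq> 0"
    using det_krylov_mat_witness by (auto simp: b_def)
  then have "det ([:x:] \<cdot>\<^sub>m 1\<^sub>m 24 - hess_mat g) = det ([:x:] \<cdot>\<^sub>m 1\<^sub>m 24 - reduced_mat g)"
    by (intro det_char_eq_if_intertwined[OF _ _ _ hess_mat_mult_krylov_mat])
      (simp_all add: hess_mat_carrier reduced_mat_carrier krylov_mat_def)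
  also have "\<dots> = hess_char_value g [:x:]"
    by (rule det_char_reduced_mat)
  finally have generic: "det ([:x:] \<cdot>\<^sub>m 1\<^sub>m 24 - hess_mat g) = \<dots>" .
  have "det (x \<cdot>\<^sub>m 1\<^sub>m 24 - hess_mat a) = poly (det ([:x:] \<cdot>\<^sub>m 1\<^sub>m 24 - hess_mat g)) 0"
    using comm_ring_hom.hom_det[OF eval0, of "[:x:] \<cdot>\<^sub>m 1\<^sub>m 24 - hess_mat g"]
      comm_ring_hom.hom_char_mat[OF eval0 hess_mat_carrier, of "[:x:]"] comm_ring_hom.hom_hess_mat[OF eval0, of g]
    by (simp add: g0)
  also have "\<dots> = hess_char_value a x"
    unfolding generic using comm_ring_hom.hom_hess_char_value[OF eval0, of g "[:x:]"] by (simp add: g0)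
  finally show ?thesis .
qed

theorem proposition3p1:
  fixes a :: "nat \<Rightarrow> real"
  assumes "(\<Sum>i<24. (a i)\<^sup>2) = 1"
  defines "W \<equiv> Pcub a"
    and "m \<equiv> enorm8 (xpart a) * enorm8 (ypart a) * enorm8 (zpart a)"
  shows "char_poly (hessian 24 Pcub a) =
           [:2 * m, -1, 0, 1:] * [:- 2 * m, -1, 0, 1:] * [:2 * W, -1, 0, 1:] ^ 6"
proof -
  let ?sq = "\<lambda>p :: nat \<Rightarrow> real. oct_inner p p"
  have sqnorm: "sqnorm24 a = 1"
    using assms(1) unfolding atLeast0LessThan[symmetric]
    by (simp add: sqnorm24_def oct_inner_def xcoord_def ycoord_def zcoord_def sum_atLeast0_lessThan_24 power2_eq_square add_ac)
  have enorm8: "enorm8 (xpart a) = sqrt (?sq (xcoord a))" "enorm8 (ypart a) = sqrt (?sq (ycoord a))"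
      "enorm8 (zpart a) = sqrt (?sq (zcoord a))"
    by (simp_all add: enorm8_def sum_lessThan_8 oct_inner_def xpart_def ypart_def zpart_def xcoord_def ycoord_def zcoord_def power2_eq_square)
  have "?sq p \<ge> 0" for p by (simp add: oct_inner_def)
  then have m_sq: "m ^ 2 = ?sq (xcoord a) * ?sq (ycoord a) * ?sq (zcoord a)"
    unfolding m_def enorm8 by (simp add: power_mult_distrib)
  have "poly (char_poly (hessian 24 Pcub a)) x =
      poly ([:2 * m, -1, 0, 1:] * [:- 2 * m, -1, 0, 1:] * [:2 * W, -1, 0, 1:] ^ 6) x" for x
  proof -
    have "poly (char_poly (hessian 24 Pcub a)) x = ((x ^ 3 - x) ^ 2 - 4 * m ^ 2) * (x ^ 3 - x + 2 * W) ^ 6"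
      unfolding hessian_eq_hess_mat W_def Pcub_eq_oct_cubic m_sq
      by (simp add: poly_char_poly_eq_det[OF hess_mat_carrier] det_char_hess_mat hess_char_value_def sqnorm)
    then show ?thesis by (simp add: power2_eq_square power3_eq_cube algebra_simps)
  qed
  then show ?thesis by (simp add: poly_eq_poly_eq_iff[symmetric] fun_eq_iff)
qed

end
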